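(* Let $\Gamma$ be a group and $S$ a strongly $\Gamma$-graded semigroup with local units. Then (1) $S$ is regular if and only if $S_\varepsilon$ is regular; and (2) $S$ is an inverse semigroup if and only if $S_\varepsilon$ is an inverse semigroup.
   Context: Semigroups have a zero; $S$ is $\Gamma$-graded via $\deg:S\setminus\{0\}\to\Gamma$ with $\deg(st)=\deg(s)\deg(t)$ whenever $st\neq0$; $S_\alpha=\deg^{-1}(\alpha)\cup\{0\}$, $\varepsilon$ the identity of $\Gamma$; strongly graded means $S_\alpha S_\beta=S_{\alpha\beta}$ for all $\alpha,\beta$. $S$ has local units if for each $s$ there are idempotents $u,v$ with $us=s=sv$. Regular: every $s$ has $t$ with $sts=s$. *)

theory Defs
  imports "HOL-Algebra.Group"
begin

definition semigroup0 :: "'a set \<Rightarrow> ('a \<Rightarrow> 'a \<Rightarrow> 'a) \<Rightarrow> 'a \<Rightarrow> bool" where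
  "semigroup0 S m z \<longleftrightarrow>
     (\<forall>s\<in>S. \<forall>t\<in>S. m s t \<in> S) \<and>
     (\<forall>s\<in>S. \<forall>t\<in>S. \<forall>u\<in>S. m (m s t) u = m s (m t u)) \<and>
     z \<in> S \<and> (\<forall>s\<in>S. m z s = z \<and> m s z = z)"

definition graded :: "('g, 'b) monoid_scheme \<Rightarrow> 'a set \<Rightarrow> ('a \<Rightarrow> 'a \<Rightarrow> 'a) \<Rightarrow> 'a \<Rightarrow> ('a \<Rightarrow> 'g) \<Rightarrow> bool" where
  "graded G S m z deg \<longleftrightarrow>
     (\<forall>s\<in>S - {z}. deg s \<in> carrier G) \<and>
     (\<forall>s\<in>S - {z}. \<forall>t\<in>S - {z}. m s t \<noteq> z \<longrightarrow> deg (m s t) = deg s \<otimes>\<^bsub>G\<^esub> deg t)"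

definition component :: "'a set \<Rightarrow> 'a \<Rightarrow> ('a \<Rightarrow> 'g) \<Rightarrow> 'g \<Rightarrow> 'a set" where
  "component S z deg \<alpha> = {s \<in> S - {z}. deg s = \<alpha>} \<union> {z}"

definition setmult :: "('a \<Rightarrow> 'a \<Rightarrow> 'a) \<Rightarrow> 'a set \<Rightarrow> 'a set \<Rightarrow> 'a set" where
  "setmult m A B = {m a b | a b. a \<in> A \<and> b \<in> B}"

definition strongly_graded :: "('g, 'b) monoid_scheme \<Rightarrow> 'a set \<Rightarrow> ('a \<Rightarrow> 'a \<Rightarrow> 'a) \<Rightarrow> 'a \<Rightarrow> ('a \<Rightarrow> 'g) \<Rightarrow> bool" where
  "strongly_graded G S m z deg \<longleftrightarrow> graded G S m z deg \<and>
     (\<forall>\<alpha>\<in>carrier G. \<forall>\<beta>\<in>carrier G.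
        setmult m (component S z deg \<alpha>) (component S z deg \<beta>) = component S z deg (\<alpha> \<otimes>\<^bsub>G\<^esub> \<beta>))"

definition has_local_units :: "'a set \<Rightarrow> ('a \<Rightarrow> 'a \<Rightarrow> 'a) \<Rightarrow> bool" where
  "has_local_units S m \<longleftrightarrow>
     (\<forall>s\<in>S. \<exists>u\<in>S. \<exists>v\<in>S. m u u = u \<and> m v v = v \<and> m u s = s \<and> m s v = s)"

definition regular_sg :: "'a set \<Rightarrow> ('a \<Rightarrow> 'a \<Rightarrow> 'a) \<Rightarrow> bool" where
  "regular_sg T m \<longleftrightarrow> (\<forall>s\<in>T. \<exists>t\<in>T. m (m s t) s = s)"

definition inverse_sg :: "'a set \<Rightarrow> ('a \<Rightarrow> 'a \<Rightarrow> 'a) \<Rightarrow> bool" where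
  "inverse_sg T m \<longleftrightarrow>
     (\<forall>s\<in>T. \<exists>!t. t \<in> T \<and> m (m s t) s = s \<and> m (m t s) t = t)"

end

theory Submission
  imports Defs
begin

text \<open>
A semigroup is inverse iff it is regular and its idempotents commute.
In a graded semigroup every nonzero idempotent has degree \<open>\<epsilon>\<close>, and
\<open>s t s = s \<noteq> 0\<close> forces \<open>deg t = (deg s)\<inverse>\<close>; so inner inverses of elements
of \<open>S\<^sub>\<epsilon>\<close> stay in \<open>S\<^sub>\<epsilon>\<close>, and regularity and the inverse property pass
from \<open>S\<close> to \<open>S\<^sub>\<epsilon>\<close>. Conversely, for \<open>s \<noteq> 0\<close> of degree \<open>\<alpha>\<close> a local
unit \<open>u\<close> with \<open>u s = s\<close> lies in \<open>S\<^sub>\<epsilon> = S\<^sub>\<alpha> S\<^bsub>\<alpha>\<inverse>\<^esub>\<close>, say \<open>u = a b\<close>; then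
\<open>b s \<in> S\<^sub>\<epsilon>\<close>, and an inner inverse \<open>x\<close> of \<open>b s\<close> gives the inner inverse
\<open>x b\<close> of \<open>s = a (b s)\<close>. As all idempotents lie in \<open>S\<^sub>\<epsilon>\<close>, commutation of
idempotents transfers in both directions.
\<close>

locale semigroup_on =
  fixes T :: "'a set" and m :: "'a \<Rightarrow> 'a \<Rightarrow> 'a"
  assumes mult_closed [simp]: "a \<in> T \<Longrightarrow> b \<in> T \<Longrightarrow> m a b \<in> T"
    and mult_assoc [simp]: "a \<in> T \<Longrightarrow> b \<in> T \<Longrightarrow> c \<in> T \<Longrightarrow> m (m a b) c = m a (m b c)"
begin

lemma mult_mult_eq:
  "m a b = c \<Longrightarrow> a \<in> T \<Longrightarrow> b \<in> T \<Longrightarrow> w \<in> T \<Longrightarrow> m a (m b w) = m c w"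
  by (metis mult_assoc)

lemma inverse_unique:
  assumes "inverse_sg T m" and "s \<in> T" "t \<in> T" "t' \<in> T"
    and "m (m s t) s = s" "m (m t s) t = t"
    and "m (m s t') s = s" "m (m t' s) t' = t'"
  shows "t = t'"
  using assms unfolding inverse_sg_def by blast

lemma idempotent_mult_idempotent:
  assumes inv: "inverse_sg T m" and T: "a \<in> T" "b \<in> T" and aa: "m a a = a" and bb: "m b b = b"
  shows "m (m a b) (m a b) = m a b"
proof -
  have aa': "\<And>w. w \<in> T \<Longrightarrow> m a (m a w) = m a w" using mult_mult_eq[OF aa] T by simp
  have bb': "\<And>w. w \<in> T \<Longrightarrow> m b (m b w) = m b w" using mult_mult_eq[OF bb] T by simp
  obtain x where x: "x \<in> T" "m (m (m a b) x) (m a b) = m a b" "m (m x (m a b)) x = x"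
    using inv T unfolding inverse_sg_def by (meson mult_closed)
  have x1: "m a (m b (m x (m a b))) = m a b" and x2: "m x (m a (m b x)) = x"
    using x T by simp_all
  have x1': "\<And>w. w \<in> T \<Longrightarrow> m a (m b (m x (m a (m b w)))) = m a (m b w)"
    using mult_mult_eq[OF x1] x T by simp
  have x2': "\<And>w. w \<in> T \<Longrightarrow> m x (m a (m b (m x w))) = m x w"
    using mult_mult_eq[OF x2] x T by simp
  \<comment> \<open>As a and b are idempotent, b x a is again an inverse of a b; hence x = b x a is idempotent.\<close>
  have "m b (m x a) = x"
  proof (rule inverse_unique[OF inv, of "m a b"])
    show "m (m (m a b) (m b (m x a))) (m a b) = m a b" using x T x1 x1' bb' aa' by simp
    show "m (m (m b (m x a)) (m a b)) (m b (m x a)) = m b (m x a)" using x T x2 x2' bb' aa' by simp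
  qed (use x T in simp_all)
  then have xx: "m x x = x"
    using x T x2' by (metis mult_assoc mult_closed)
  have "m a b = x"
    by (rule inverse_unique[OF inv, of x]) (use x T xx in simp_all)
  with xx show ?thesis by simp
qed

lemma idempotents_commute:
  assumes inv: "inverse_sg T m" and T: "e \<in> T" "f \<in> T" and ee: "m e e = e" and ff: "m f f = f"
  shows "m e f = m f e"
proof -
  have ee': "\<And>w. w \<in> T \<Longrightarrow> m e (m e w) = m e w" using mult_mult_eq[OF ee] T by simp
  have ff': "\<And>w. w \<in> T \<Longrightarrow> m f (m f w) = m f w" using mult_mult_eq[OF ff] T by simp
  have ef: "m (m e f) (m e f) = m e f" and fe: "m (m f e) (m f e) = m f e"
    using idempotent_mult_idempotent[OF inv] T ee ff by auto
  \<comment> \<open>The idempotent e f and also f e are inverses of e f.\<close>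
  show ?thesis
  proof (rule inverse_unique[OF inv, of "m e f"])
    show "m (m (m e f) (m f e)) (m e f) = m e f" using T ee' ff' ef by simp
    show "m (m (m f e) (m e f)) (m f e) = m f e" using T ee' ff' fe by simp
  qed (use T ef in simp_all)
qed

lemma regular_has_inverse:
  assumes "regular_sg T m" and s: "s \<in> T"
  obtains t where "t \<in> T" "m (m s t) s = s" "m (m t s) t = t"
proof -
  obtain t where t: "t \<in> T" "m (m s t) s = s" using assms unfolding regular_sg_def by blast
  have sts: "m s (m t s) = s" using t s by simp
  have sts': "\<And>w. w \<in> T \<Longrightarrow> m s (m t (m s w)) = m s w" using mult_mult_eq[OF sts] s t by simp
  show ?thesis
    by (rule that[of "m t (m s t)"]) (use t s sts sts' in simp_all)
qed

lemma inverse_unique_if_idempotents_commute: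
  assumes comm: "\<And>e f. e \<in> T \<Longrightarrow> f \<in> T \<Longrightarrow> m e e = e \<Longrightarrow> m f f = f \<Longrightarrow> m e f = m f e"
    and T: "s \<in> T" "t \<in> T" "y \<in> T"
    and t: "m (m s t) s = s" "m (m t s) t = t"
    and y: "m (m s y) s = s" "m (m y s) y = y"
  shows "t = y"
proof -
  have idem: "m (m a s) (m a s) = m a s" "m (m s a) (m s a) = m s a"
    if "a \<in> T" "m (m s a) s = s" for a
    using that T by (metis mult_assoc mult_closed)+
  have c1: "m (m t s) (m y s) = m (m y s) (m t s)" and c2: "m (m s t) (m s y) = m (m s y) (m s t)"
    using comm idem[of t] idem[of y] T t y by simp_all
  have "t = m (m t s) t" using t by simp
  also have "\<dots> = m (m t (m (m s y) s)) t" using y by simp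
  also have "\<dots> = m (m (m t s) (m y s)) t" using T by simp
  also have "\<dots> = m (m (m y s) (m t s)) t" using c1 by simp
  also have "\<dots> = m y (m s (m (m t s) t))" using T by simp
  also have "\<dots> = m y (m s t)" using t by simp
  finally have t_eq: "t = m y (m s t)" .
  have "y = m (m y s) y" using y by simp
  also have "\<dots> = m y (m (m (m s t) s) y)" using t T by simp
  also have "\<dots> = m y (m (m s t) (m s y))" using T by simp
  also have "\<dots> = m y (m (m s y) (m s t))" using c2 by simp
  also have "\<dots> = m (m (m y s) y) (m s t)" using T by simp
  also have "\<dots> = m y (m s t)" using y by simp
  finally show ?thesis using t_eq by simp
qed

lemma inverse_sg_iff_regular_idempotents_commute:
  "inverse_sg T m \<longleftrightarrow>
     regular_sg T m \<and> (\<forall>e\<in>T. \<forall>f\<in>T. m e e = e \<longrightarrow> m f f = f \<longrightarrow> m e f = m f e)"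
proof
  assume inv: "inverse_sg T m"
  then have "regular_sg T m" unfolding inverse_sg_def regular_sg_def by blast
  with idempotents_commute[OF inv] show "regular_sg T m \<and> (\<forall>e\<in>T. \<forall>f\<in>T. m e e = e \<longrightarrow> m f f = f \<longrightarrow> m e f = m f e)"
    by blast
next
  assume "regular_sg T m \<and> (\<forall>e\<in>T. \<forall>f\<in>T. m e e = e \<longrightarrow> m f f = f \<longrightarrow> m e f = m f e)"
  then have reg: "regular_sg T m"
    and comm: "\<And>e f. e \<in> T \<Longrightarrow> f \<in> T \<Longrightarrow> m e e = e \<Longrightarrow> m f f = f \<Longrightarrow> m e f = m f e"
    by blast+
  show "inverse_sg T m"
    unfolding inverse_sg_def
  proof
    fix s assume s: "s \<in> T"
    obtain t where "t \<in> T" "m (m s t) s = s" "m (m t s) t = t"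
      using regular_has_inverse[OF reg s] .
    with inverse_unique_if_idempotents_commute[OF comm] s
    show "\<exists>!t. t \<in> T \<and> m (m s t) s = s \<and> m (m t s) t = t"
      by blast
  qed
qed

end
lemma component_iff: "s \<in> component S z deg \<alpha> \<longleftrightarrow> s = z \<or> s \<in> S \<and> deg s = \<alpha>"
  unfolding component_def by auto

locale graded_semigroup0 =
  fixes G :: "('g, 'b) monoid_scheme"
    and S :: "'a set" and m :: "'a \<Rightarrow> 'a \<Rightarrow> 'a" and z :: 'a and deg :: "'a \<Rightarrow> 'g"
  assumes group: "group G"
    and semigroup0: "semigroup0 S m z"
    and graded: "graded G S m z deg"
begin

abbreviation identity_component :: "'a set"
  where "identity_component \<equiv> component S z deg \<one>\<^bsub>G\<^esub>"

lemma zero_closed: "z \<in> S"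
  and mult_zero_left: "s \<in> S \<Longrightarrow> m z s = z"
  and mult_zero_right: "s \<in> S \<Longrightarrow> m s z = z"
  using semigroup0 unfolding semigroup0_def by auto

sublocale S: semigroup_on S m
  using semigroup0 by unfold_locales (auto simp: semigroup0_def)

lemma deg_closed: "s \<in> S \<Longrightarrow> s \<noteq> z \<Longrightarrow> deg s \<in> carrier G"
  using graded unfolding graded_def by auto

lemma deg_mult:
  assumes "s \<in> S" "t \<in> S" "m s t \<noteq> z"
  shows "deg (m s t) = deg s \<otimes>\<^bsub>G\<^esub> deg t"
proof -
  have "s \<noteq> z" "t \<noteq> z" using assms mult_zero_left mult_zero_right by auto
  with assms graded show ?thesis unfolding graded_def by blast
qed

lemma component_subset: "component S z deg \<alpha> \<subseteq> S"
  using zero_closed by (auto simp: component_iff)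

sublocale E: semigroup_on identity_component m
proof
  fix a b assume ab: "a \<in> identity_component" "b \<in> identity_component"
  then have S: "a \<in> S" "b \<in> S" using component_subset by auto
  show "m a b \<in> identity_component"
  proof (cases "a = z \<or> b = z \<or> m a b = z")
    case True
    then show ?thesis using S mult_zero_left mult_zero_right by (auto simp: component_iff)
  next
    case False
    then have "deg a = \<one>\<^bsub>G\<^esub>" "deg b = \<one>\<^bsub>G\<^esub>" using ab by (auto simp: component_iff)
    then show ?thesis
      using False S deg_mult[of a b] group.is_monoid[OF group] by (simp add: component_iff)
  qed
qed (use component_subset in \<open>meson S.mult_assoc subsetD\<close>)

lemma degree_of_inner_inverse:
  assumes "s \<in> S" "t \<in> S" "s \<noteq> z" "m (m s t) s = s"
  shows "t \<noteq> z" and "deg t = inv\<^bsub>G\<^esub> deg s"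
proof -
  interpret G: group G by (fact group)
  show tz: "t \<noteq> z" using assms mult_zero_left mult_zero_right by auto
  have stz: "m s t \<noteq> z" using assms mult_zero_left by auto
  have "deg s \<otimes>\<^bsub>G\<^esub> deg t \<otimes>\<^bsub>G\<^esub> deg s = deg s"
    using assms stz deg_mult[of s t] deg_mult[of "m s t" s] by simp
  then have "deg s \<otimes>\<^bsub>G\<^esub> deg t = \<one>\<^bsub>G\<^esub>"
    using assms tz deg_closed by (metis G.m_closed G.r_cancel_one')
  then show "deg t = inv\<^bsub>G\<^esub> deg s"
    using assms tz deg_closed by (metis G.inv_equality G.l_inv_ex G.r_inv G.inv_unique G.inv_closed)
qed

lemma idempotent_in_identity_component:
  assumes "e \<in> S" "m e e = e"
  shows "e \<in> identity_component"
proof (cases "e = z")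
  case False
  interpret G: group G by (fact group)
  have "deg e \<otimes>\<^bsub>G\<^esub> deg e = deg e" using assms False deg_mult[of e e] by simp
  then show ?thesis
    using assms False deg_closed by (metis G.r_cancel_one' component_iff)
qed (simp add: component_iff)

lemma inner_inverse_in_identity_component:
  assumes "s \<in> identity_component" "s \<noteq> z" "t \<in> S" "m (m s t) s = s"
  shows "t \<in> identity_component"
proof -
  interpret G: group G by (fact group)
  from assms have "s \<in> S" "deg s = \<one>\<^bsub>G\<^esub>" by (auto simp: component_iff)
  with assms degree_of_inner_inverse[of s t] show ?thesis by (simp add: component_iff)
qed

lemma regular_sg_identity_component:
  assumes reg: "regular_sg S m"
  shows "regular_sg identity_component m"
  unfolding regular_sg_def
proof
  fix s assume s: "s \<in> identity_component"
  show "\<exists>t\<in>identity_component. m (m s t) s = s"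
  proof (cases "s = z")
    case True
    then show ?thesis
      using zero_closed mult_zero_left by (intro bexI[of _ z]) (auto simp: component_iff)
  next
    case False
    obtain t where "t \<in> S" "m (m s t) s = s"
      using reg s component_subset unfolding regular_sg_def by blast
    with s False show ?thesis using inner_inverse_in_identity_component by blast
  qed
qed

lemma inverse_sg_identity_component:
  assumes "inverse_sg S m"
  shows "inverse_sg identity_component m"
  using assms regular_sg_identity_component component_subset
  unfolding S.inverse_sg_iff_regular_idempotents_commute E.inverse_sg_iff_regular_idempotents_commute
  by blast

end

locale strongly_graded_semigroup0 =
  fixes G :: "('g, 'b) monoid_scheme"
    and S :: "'a set" and m :: "'a \<Rightarrow> 'a \<Rightarrow> 'a" and z :: 'a and deg :: "'a \<Rightarrow> 'g"
  assumes group: "group G"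
    and semigroup0: "semigroup0 S m z"
    and strongly_graded: "strongly_graded G S m z deg"
    and local_units: "has_local_units S m"
begin

sublocale graded_semigroup0
  using group semigroup0 strongly_graded
  by (simp add: graded_semigroup0_def strongly_graded_def)

lemma identity_component_factor:
  assumes s: "s \<in> S" "s \<noteq> z" and u: "u \<in> identity_component"
  obtains a b where "a \<in> S" "b \<in> S" "u = m a b" "m b s \<in> identity_component"
proof -
  interpret G: group G by (fact group)
  define \<alpha> where "\<alpha> = deg s"
  have \<alpha>: "\<alpha> \<in> carrier G" using deg_closed s \<alpha>_def by simp
  have "u \<in> setmult m (component S z deg \<alpha>) (component S z deg (inv\<^bsub>G\<^esub> \<alpha>))"
    using strongly_graded \<alpha> u unfolding strongly_graded_def by simp
  then obtain a b where a: "a \<in> component S z deg \<alpha>" and b: "b \<in> component S z deg (inv\<^bsub>G\<^esub> \<alpha>)"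
    and "u = m a b"
    unfolding setmult_def by blast
  moreover have "m b s \<in> identity_component"
  proof (cases "b = z \<or> m b s = z")
    case True
    then show ?thesis using s mult_zero_left by (auto simp: component_iff)
  next
    case False
    with b s show ?thesis using \<alpha> \<alpha>_def deg_mult[of b s] by (auto simp: component_iff)
  qed
  ultimately show ?thesis using that component_subset by blast
qed

lemma regular_sg_if_identity_component:
  assumes reg: "regular_sg identity_component m"
  shows "regular_sg S m"
  unfolding regular_sg_def
proof
  fix s assume s: "s \<in> S"
  show "\<exists>t\<in>S. m (m s t) s = s"
  proof (cases "s = z")
    case True
    then show ?thesis using zero_closed mult_zero_left by (intro bexI[of _ z]) auto
  next
    case False
    obtain u where u: "u \<in> S" "m u u = u" "m u s = s"
      using local_units s unfolding has_local_units_def by blast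
    obtain a b where ab: "a \<in> S" "b \<in> S" "u = m a b" and bs: "m b s \<in> identity_component"
      using identity_component_factor[OF s False idempotent_in_identity_component[OF u(1,2)]] .
    obtain x where x: "x \<in> identity_component" "m (m (m b s) x) (m b s) = m b s"
      using reg bs unfolding regular_sg_def by blast
    have "x \<in> S" using x component_subset by blast
    have s_eq: "s = m a (m b s)" using u ab s by simp
    have "m (m (m a (m b s)) (m x b)) s = m a (m (m (m b s) x) (m b s))"
      using ab s \<open>x \<in> S\<close> by simp
    then have "m (m s (m x b)) s = m a (m (m (m b s) x) (m b s))"
      unfolding s_eq[symmetric] .
    also have "\<dots> = s" using x s_eq by simp
    finally show ?thesis using \<open>x \<in> S\<close> ab by auto
  qed
qed

lemma inverse_sg_if_identity_component:
  assumes "inverse_sg identity_component m"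
  shows "inverse_sg S m"
  using assms regular_sg_if_identity_component idempotent_in_identity_component
  unfolding S.inverse_sg_iff_regular_idempotents_commute E.inverse_sg_iff_regular_idempotents_commute
  by blast

end

theorem proposition2p13:
  fixes G :: "('g, 'b) monoid_scheme"
    and S :: "'a set" and m :: "'a \<Rightarrow> 'a \<Rightarrow> 'a" and z :: 'a and deg :: "'a \<Rightarrow> 'g"
  assumes "group G"
    and "semigroup0 S m z"
    and "strongly_graded G S m z deg"
    and "has_local_units S m"
  shows "(regular_sg S m \<longleftrightarrow> regular_sg (component S z deg \<one>\<^bsub>G\<^esub>) m)
       \<and> (inverse_sg S m \<longleftrightarrow> inverse_sg (component S z deg \<one>\<^bsub>G\<^esub>) m)"
proof -
  interpret strongly_graded_semigroup0 G S m z deg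
    using assms by (rule strongly_graded_semigroup0.intro)
  show ?thesis
    using regular_sg_identity_component regular_sg_if_identity_component
      inverse_sg_identity_component inverse_sg_if_identity_component
    by blast
qed

end
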